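(* For every approval-based multi-winner election $\sigma=\langle\mathcal V,\mathcal C,S,B\rangle$ and every non-empty $\mathcal A\subseteq\mathcal C$, there exists a non-empty $\mathcal K\subseteq\mathcal A$ with the following two properties: 1. $\mathrm{Supp}_F(c)=\mathrm{maxMin}(\sigma,\mathcal A)$ for every $F\in\mathfrak F^{\mathrm{opt}}_{\sigma,\mathcal A}$ and every $c\in\mathcal K$; 2. $\displaystyle\mathrm{maxMin}(\sigma,\mathcal A)=\frac{\sum_{y\in2^{\mathcal C}:\,y\cap\mathcal K\neq\emptyset}B(y)}{|\mathcal K|}$.
   Context: An approval-based multi-winner election is a tuple $\sigma=\langle \mathcal V,\mathcal C,S,B\rangle$, where $\mathcal V$ is a finite set of agents, $\mathcal C$ is a finite set of candidates, $1\le S\le|\mathcal C|$ is an integer, and $B:2^{\mathcal C}\to\mathbb N$ gives, for each $\mathcal A\subseteq\mathcal C$, the number $B(\mathcal A)$ of agents whose ballot is exactly $\mathcal A$ (with $\sum_{\mathcal A}B(\mathcal A)\le|\mathcal V|$). For a non-empty $\mathcal A\subseteq\mathcal C$, the family $\mathfrak F_{\sigma,\mathcal A}$ is the set of all $F:2^{\mathcal C}\times\mathcal A\to\mathbb R$ such that: - $F(y,c)\ge0$ for all $y$ and $c$; - $F(y,c)=0$ if $c\notin y$; - $\sum_{c\in\mathcal A\cap y}F(y,c)=B(y)$ whenever $y\cap\mathcal A\neq\emptyset$. We write $\mathrm{Supp}_F(c)=\sum_yF(y,c)$ and $\mathrm{maxMin}(\sigma,\mathcal A)=\sup_{F\in\mathfrak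 F_{\sigma,\mathcal A}}\min_{c\in\mathcal A}\mathrm{Supp}_F(c)$. We also write $\mathfrak F^{\mathrm{opt}}_{\sigma,\mathcal A}=\{F\in\mathfrak F_{\sigma,\mathcal A}:\mathrm{Supp}_F(c)\ge\mathrm{maxMin}(\sigma,\mathcal A)\ \forall c\in\mathcal A\}$. *)

theory Defs
  imports "HOL-Analysis.Analysis"
begin

text \<open>An approval-based multi-winner election <V, C, S, B>. The ballot function B is
  only meaningful on subsets of C (elements of Pow C).\<close>
definition election :: "'v set \<Rightarrow> 'c set \<Rightarrow> nat \<Rightarrow> ('c set \<Rightarrow> nat) \<Rightarrow> bool" where
  "election V C S B \<longleftrightarrow> finite V \<and> finite C \<and> 1 \<le> S \<and> S \<le> card C \<and>
     (\<Sum>y\<in>Pow C. B y) \<le> card V"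

text \<open>The family F_{sigma,A}: functions on 2^C x A (values outside this domain are ignored).\<close>
definition Ffam :: "'c set \<Rightarrow> ('c set \<Rightarrow> nat) \<Rightarrow> 'c set \<Rightarrow> ('c set \<Rightarrow> 'c \<Rightarrow> real) set" where
  "Ffam C B A = {F. (\<forall>y\<in>Pow C. \<forall>c\<in>A. F y c \<ge> 0) \<and>
                    (\<forall>y\<in>Pow C. \<forall>c\<in>A. c \<notin> y \<longrightarrow> F y c = 0) \<and>
                    (\<forall>y\<in>Pow C. y \<inter> A \<noteq> {} \<longrightarrow> (\<Sum>c\<in>A \<inter> y. F y c) = real (B y))}"

definition Supp :: "'c set \<Rightarrow> ('c set \<Rightarrow> 'c \<Rightarrow> real) \<Rightarrow> 'c \<Rightarrow> real" where
  "Supp C F c = (\<Sum>y\<in>Pow C. F y c)"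

definition maxMin :: "'c set \<Rightarrow> ('c set \<Rightarrow> nat) \<Rightarrow> 'c set \<Rightarrow> real" where
  "maxMin C B A = (SUP F\<in>Ffam C B A. Min ((\<lambda>c. Supp C F c) ` A))"

definition Fopt :: "'c set \<Rightarrow> ('c set \<Rightarrow> nat) \<Rightarrow> 'c set \<Rightarrow> ('c set \<Rightarrow> 'c \<Rightarrow> real) set" where
  "Fopt C B A = {F \<in> Ffam C B A. \<forall>c\<in>A. Supp C F c \<ge> maxMin C B A}"

end

theory Submission
  imports Defs
begin

text \<open>
  For a non-empty \<open>K \<subseteq> A\<close> let \<open>W(K)\<close> be the number of voters approving some candidate
  of \<open>K\<close>. Every \<open>F\<close> in the family sends at most \<open>W(K)\<close> support into \<open>K\<close>, so its
  minimal support is at most \<open>W(K) / |K|\<close>. Conversely, for \<open>\<mu>\<close> the least of these ratios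
  the uniform demand \<open>\<mu>\<close> satisfies Hall's condition, and the fractional Hall theorem
  (a supply-demand version, proved by induction on the size of the instance) yields an
  \<open>F\<close> giving every candidate support at least \<open>\<mu>\<close>. Hence \<open>maxMin = W(K) / |K|\<close> for
  a minimising \<open>K\<close>, and an optimal \<open>F\<close> gives every candidate of \<open>K\<close> exactly \<open>\<mu>\<close>,
  since the supports over \<open>K\<close> are each at least \<open>\<mu>\<close> and sum to at most \<open>W(K) = |K| \<mu>\<close>.
\<close>

text \<open>Supply-demand instances: source \<open>i \<in> I\<close> has capacity \<open>b i\<close> and may ship only to
  the sinks \<open>N i\<close>; sink \<open>c \<in> A\<close> demands \<open>d c\<close>.\<close>

definition neighbour_weight :: "'i set \<Rightarrow> ('i \<Rightarrow> 'c set) \<Rightarrow> ('i \<Rightarrow> real) \<Rightarrow> 'c set \<Rightarrow> real" where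
  "neighbour_weight I N b K = (\<Sum>i\<in>{i\<in>I. N i \<inter> K \<noteq> {}}. b i)"

definition hall_condition ::
    "'i set \<Rightarrow> ('i \<Rightarrow> 'c set) \<Rightarrow> ('i \<Rightarrow> real) \<Rightarrow> 'c set \<Rightarrow> ('c \<Rightarrow> real) \<Rightarrow> bool" where
  "hall_condition I N b A d \<longleftrightarrow> finite I \<and> finite A \<and> (\<forall>i\<in>I. 0 \<le> b i) \<and>
     (\<forall>K\<subseteq>A. sum d K \<le> neighbour_weight I N b K)"

definition allocation :: "'i set \<Rightarrow> ('i \<Rightarrow> 'c set) \<Rightarrow> ('i \<Rightarrow> real) \<Rightarrow> 'c set \<Rightarrow> ('c \<Rightarrow> real) \<Rightarrow>
    ('i \<Rightarrow> 'c \<Rightarrow> real) \<Rightarrow> bool" where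
  "allocation I N b A d F \<longleftrightarrow> (\<forall>i c. 0 \<le> F i c) \<and> (\<forall>i c. c \<notin> N i \<longrightarrow> F i c = 0) \<and>
     (\<forall>i\<in>I. sum (F i) A \<le> b i) \<and> (\<forall>c\<in>A. d c \<le> (\<Sum>i\<in>I. F i c))"

text \<open>Each disjunct splits the instance into strictly smaller ones.\<close>
definition hall_reducible ::
    "'i set \<Rightarrow> ('i \<Rightarrow> 'c set) \<Rightarrow> ('i \<Rightarrow> real) \<Rightarrow> 'c set \<Rightarrow> ('c \<Rightarrow> real) \<Rightarrow> bool" where
  "hall_reducible I N b A d \<longleftrightarrow> (\<exists>i\<in>I. b i = 0) \<or> (\<exists>c\<in>A. d c \<le> 0) \<or>
     (\<exists>K. K \<noteq> {} \<and> K \<subset> A \<and> sum d K = neighbour_weight I N b K)"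

lemma sum_fun_upd:
  fixes f :: "'a \<Rightarrow> 'b::ab_group_add"
  assumes "finite S"
  shows "sum (f(a := v)) S = (if a \<in> S then sum f S - f a + v else sum f S)"
proof (cases "a \<in> S")
  case True
  have "sum (f(a := v)) S = v + sum (f(a := v)) (S - {a})"
    using sum.remove[OF assms True, of "f(a := v)"] by simp
  also have "sum (f(a := v)) (S - {a}) = sum f (S - {a})" by (rule sum.cong) auto
  also have "sum f (S - {a}) = sum f S - f a"
    using sum.remove[OF assms True, of f] by (simp add: algebra_simps)
  finally show ?thesis using True by (simp add: algebra_simps)
qed (auto intro!: sum.cong)

lemma neighbour_weight_fun_upd:
  assumes "finite I" "i0 \<in> I"
  shows "neighbour_weight I N (b(i0 := v)) K =
    (if N i0 \<inter> K \<noteq> {} then neighbour_weight I N b K - b i0 + v else neighbour_weight I N b K)"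
  unfolding neighbour_weight_def using assms by (subst sum_fun_upd) auto

lemma neighbour_weight_Un_residual:
  assumes "finite I"
  shows "neighbour_weight I N b (L \<union> K) =
    neighbour_weight I N b K + neighbour_weight {i\<in>I. N i \<inter> K = {}} N b L"
proof -
  let ?J = "{i\<in>I. N i \<inter> K \<noteq> {}}" and ?J' = "{i\<in>{i\<in>I. N i \<inter> K = {}}. N i \<inter> L \<noteq> {}}"
  have "{i\<in>I. N i \<inter> (L \<union> K) \<noteq> {}} = ?J \<union> ?J'" "?J \<inter> ?J' = {}" by auto
  moreover have "finite ?J" "finite ?J'" using assms by auto
  ultimately show ?thesis unfolding neighbour_weight_def by (simp only: sum.union_disjoint)
qed

lemma hall_condition_subset:
  "hall_condition I N b A d \<Longrightarrow> A' \<subseteq> A \<Longrightarrow> hall_condition I N b A' d"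
  unfolding hall_condition_def by (meson finite_subset order_trans)

lemma hall_condition_residual:
  assumes hall: "hall_condition I N b A d" and "K \<subseteq> A"
    and tight: "sum d K = neighbour_weight I N b K"
  shows "hall_condition {i\<in>I. N i \<inter> K = {}} N b (A - K) d"
  unfolding hall_condition_def
proof (intro conjI allI impI)
  show "finite {i\<in>I. N i \<inter> K = {}}" "finite (A - K)" "\<forall>i\<in>{i\<in>I. N i \<inter> K = {}}. 0 \<le> b i"
    using hall unfolding hall_condition_def by auto
  fix L assume "L \<subseteq> A - K"
  have "finite L" "finite K" using hall \<open>L \<subseteq> A - K\<close> \<open>K \<subseteq> A\<close> finite_subset
    unfolding hall_condition_def by blast+
  moreover have "L \<inter> K = {}" using \<open>L \<subseteq> A - K\<close> by blast
  ultimately have "sum d (L \<union> K) = sum d L + sum d K" by (rule sum.union_disjoint)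
  moreover have "sum d (L \<union> K) \<le> neighbour_weight I N b (L \<union> K)"
    using hall \<open>L \<subseteq> A - K\<close> \<open>K \<subseteq> A\<close> unfolding hall_condition_def by blast
  moreover have "finite I" using hall unfolding hall_condition_def by blast
  ultimately show "sum d L \<le> neighbour_weight {i\<in>I. N i \<inter> K = {}} N b L"
    using tight neighbour_weight_Un_residual[of I N b L K] by linarith
qed

lemma hall_condition_remove_null:
  assumes "hall_condition I N b A d" "b i0 = 0"
  shows "hall_condition (I - {i0}) N b A d"
proof -
  have "neighbour_weight (I - {i0}) N b K = neighbour_weight I N b K" for K
  proof -
    have "{i \<in> I - {i0}. N i \<inter> K \<noteq> {}} = {i \<in> I. N i \<inter> K \<noteq> {}} - {i0}" by auto
    then show ?thesis
      using assms unfolding neighbour_weight_def hall_condition_def by (simp add: sum_diff1)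
  qed
  then show ?thesis using assms unfolding hall_condition_def by auto
qed

lemma hall_condition_transfer:
  assumes hall: "hall_condition I N b A d" and "i0 \<in> I" "c0 \<in> A" "c0 \<in> N i0"
    and "0 \<le> t" "t \<le> b i0"
    and slack: "\<And>K. K \<subseteq> A - {c0} \<Longrightarrow> N i0 \<inter> K \<noteq> {} \<Longrightarrow>
      t \<le> neighbour_weight I N b K - sum d K"
  shows "hall_condition I N (b(i0 := b i0 - t)) A (d(c0 := d c0 - t))"
  unfolding hall_condition_def
proof (intro conjI allI impI)
  show "finite I" "finite A" "\<forall>i\<in>I. 0 \<le> (b(i0 := b i0 - t)) i"
    using hall \<open>t \<le> b i0\<close> unfolding hall_condition_def by auto
  fix K assume "K \<subseteq> A"
  then have "finite K" and hall_K: "sum d K \<le> neighbour_weight I N b K"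
    using hall unfolding hall_condition_def by (auto intro: finite_subset)
  have d': "sum (d(c0 := d c0 - t)) K = sum d K - (if c0 \<in> K then t else 0)"
    using sum_fun_upd[OF \<open>finite K\<close>, of d c0 "d c0 - t"] by simp
  have b': "neighbour_weight I N (b(i0 := b i0 - t)) K =
      neighbour_weight I N b K - (if N i0 \<inter> K \<noteq> {} then t else 0)"
    using hall neighbour_weight_fun_upd[of I i0 N b "b i0 - t" K] \<open>i0 \<in> I\<close>
    unfolding hall_condition_def by simp
  show "sum (d(c0 := d c0 - t)) K \<le> neighbour_weight I N (b(i0 := b i0 - t)) K"
  proof (cases "c0 \<in> K")
    case True
    then have "N i0 \<inter> K \<noteq> {}" using \<open>c0 \<in> N i0\<close> by blast
    with True show ?thesis using d' b' hall_K by simp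
  next
    case c0_notin: False
    show ?thesis
    proof (cases "N i0 \<inter> K = {}")
      case True
      with c0_notin show ?thesis using d' b' hall_K by simp
    next
      case False
      moreover have "K \<subseteq> A - {c0}" using c0_notin \<open>K \<subseteq> A\<close> by blast
      ultimately have "t \<le> neighbour_weight I N b K - sum d K" by (rule slack[rotated])
      moreover have "sum (d(c0 := d c0 - t)) K = sum d K"
        "neighbour_weight I N (b(i0 := b i0 - t)) K = neighbour_weight I N b K - t"
        using d' b' c0_notin False by simp_all
      ultimately show ?thesis by linarith
    qed
  qed
qed

lemma allocation_insert_nonpos:
  assumes "allocation I N b (A - {c0}) d F" "d c0 \<le> 0" "finite A"
  shows "\<exists>G. allocation I N b A d G"
proof -
  define G where "G i c = (if c = c0 then 0 else F i c)" for i c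
  have "sum (G i) A = sum (F i) (A - {c0})" for i
    using \<open>finite A\<close> unfolding G_def by (simp add: sum.If_cases Diff_eq)
  moreover have "(\<Sum>i\<in>I. G i c) = (if c = c0 then 0 else \<Sum>i\<in>I. F i c)" for c
    unfolding G_def by simp
  ultimately have "allocation I N b A d G"
    using assms unfolding allocation_def G_def by auto
  then show ?thesis by blast
qed

lemma allocation_combine:
  assumes F1: "allocation I N b K d F1" and F2: "allocation {i\<in>I. N i \<inter> K = {}} N b (A - K) d F2"
    and "K \<subseteq> A" "finite I" "finite A"
  shows "\<exists>G. allocation I N b A d G"
proof -
  define G where
    "G i c = (if N i \<inter> K \<noteq> {} then if c \<in> K then F1 i c else 0 else if c \<in> K then 0 else F2 i c)"
    for i c
  have "sum (G i) A = (if N i \<inter> K \<noteq> {} then sum (F1 i) K else sum (F2 i) (A - K))" for i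
    using \<open>K \<subseteq> A\<close> \<open>finite A\<close> unfolding G_def
    by (simp add: sum.If_cases Int_absorb1 Diff_eq)
  moreover have "d c \<le> (\<Sum>i\<in>I. G i c)" if "c \<in> A" for c
  proof (cases "c \<in> K")
    case True
    then have "(\<Sum>i\<in>I. G i c) = (\<Sum>i\<in>I. F1 i c)"
      using F1 unfolding G_def allocation_def by (intro sum.cong) (auto, meson disjoint_iff)
    then show ?thesis using F1 True unfolding allocation_def by simp
  next
    case False
    then have "(\<Sum>i\<in>I. G i c) = (\<Sum>i\<in>{i\<in>I. N i \<inter> K = {}}. F2 i c)"
      using \<open>finite I\<close> unfolding G_def by (auto simp: sum.If_cases intro!: sum.cong)
    then show ?thesis using F2 False that unfolding allocation_def by simp
  qed
  moreover have "\<forall>i c. 0 \<le> G i c" "\<forall>i c. c \<notin> N i \<longrightarrow> G i c = 0"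
    using F1 F2 unfolding G_def allocation_def by auto
  ultimately have "allocation I N b A d G"
    using F1 F2 unfolding allocation_def by auto
  then show ?thesis by blast
qed

lemma allocation_extend_index:
  assumes "allocation J N b A d F" "J \<subseteq> I" "finite I" "\<forall>i\<in>I. 0 \<le> b i"
  shows "\<exists>G. allocation I N b A d G"
proof -
  define G where "G i c = (if i \<in> J then F i c else 0)" for i c
  have "sum (G i) A = (if i \<in> J then sum (F i) A else 0)" for i
    unfolding G_def by simp
  moreover have "(\<Sum>i\<in>I. G i c) = (\<Sum>i\<in>J. F i c)" for c
    using assms(2,3) unfolding G_def by (simp add: sum.If_cases Int_absorb1)
  ultimately have "allocation I N b A d G"
    using assms unfolding allocation_def G_def by auto
  then show ?thesis by blast
qed

lemma allocation_transfer:
  assumes F: "allocation I N (b(i0 := b i0 - t)) A (d(c0 := d c0 - t)) F"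
    and "i0 \<in> I" "c0 \<in> A" "c0 \<in> N i0" "0 \<le> t" "finite I" "finite A"
  shows "\<exists>G. allocation I N b A d G"
proof -
  define G where "G i c = F i c + (if i = i0 \<and> c = c0 then t else 0)" for i c
  have "sum (G i) A = sum (F i) A + (if i = i0 then t else 0)" for i
    using assms unfolding G_def by (simp add: sum.distrib)
  moreover have "(\<Sum>i\<in>I. G i c) = (\<Sum>i\<in>I. F i c) + (if c = c0 then t else 0)" for c
    using assms unfolding G_def by (simp add: sum.distrib)
  ultimately have "allocation I N b A d G"
    using assms unfolding allocation_def G_def by (auto split: if_splits)
  then show ?thesis by blast
qed

lemma allocation_if_hall_reducible:
  assumes IH: "\<And>I' A' b' d'. card I' + card A' < card I + card A \<Longrightarrow>
      hall_condition I' N b' A' d' \<Longrightarrow> \<exists>F. allocation I' N b' A' d' F"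
    and hall: "hall_condition I N b A d" and "hall_reducible I N b A d"
  shows "\<exists>F. allocation I N b A d F"
proof -
  have fin: "finite I" "finite A" and nonneg: "\<forall>i\<in>I. 0 \<le> b i"
    using hall unfolding hall_condition_def by auto
  consider (null_capacity) i0 where "i0 \<in> I" "b i0 = 0"
    | (nonpos_demand) c0 where "c0 \<in> A" "d c0 \<le> 0"
    | (tight) K where "K \<noteq> {}" "K \<subset> A" "sum d K = neighbour_weight I N b K"
    using \<open>hall_reducible I N b A d\<close> unfolding hall_reducible_def by blast
  then show ?thesis
  proof cases
    case null_capacity
    have "card (I - {i0}) + card A < card I + card A"
      using card_Diff1_less[OF fin(1) null_capacity(1)] by simp
    from IH[OF this hall_condition_remove_null[OF hall null_capacity(2)]]
    obtain F where "allocation (I - {i0}) N b A d F" by blast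
    from allocation_extend_index[OF this _ fin(1) nonneg] show ?thesis by blast
  next
    case nonpos_demand
    have "card I + card (A - {c0}) < card I + card A"
      using card_Diff1_less[OF fin(2) nonpos_demand(1)] by simp
    from IH[OF this hall_condition_subset[OF hall, of "A - {c0}"]]
    obtain F where "allocation I N b (A - {c0}) d F" by blast
    from allocation_insert_nonpos[OF this nonpos_demand(2) fin(2)] show ?thesis .
  next
    case tight
    define I' where "I' = {i\<in>I. N i \<inter> K = {}}"
    have "finite K" using tight(2) fin(2) finite_subset by blast
    have "card K < card A" using psubset_card_mono[OF fin(2) tight(2)] .
    moreover have "0 < card K" using \<open>finite K\<close> tight(1) by (simp add: card_gt_0_iff)
    moreover have "card (A - K) = card A - card K"
      using card_Diff_subset[OF \<open>finite K\<close> psubset_imp_subset[OF tight(2)]] .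
    moreover have "card I' \<le> card I" unfolding I'_def using fin(1) by (simp add: card_mono)
    ultimately have "card I + card K < card I + card A" "card I' + card (A - K) < card I + card A"
      by linarith+
    moreover have "hall_condition I N b K d" "hall_condition I' N b (A - K) d"
      using hall_condition_subset[OF hall, of K] hall_condition_residual[OF hall _ tight(3)] tight(2)
      unfolding I'_def by auto
    ultimately obtain F1 F2 where "allocation I N b K d F1" "allocation I' N b (A - K) d F2"
      using IH by meson
    from allocation_combine[OF this[unfolded I'_def]] tight(2) fin show ?thesis by blast
  qed
qed

lemma hall_reducible_after_transfer:
  assumes hall: "hall_condition I N b A d" and "\<not> hall_reducible I N b A d"
    and "i0 \<in> I" "c0 \<in> A" "c0 \<in> N i0"
  obtains t where "0 < t"
    "hall_condition I N (b(i0 := b i0 - t)) A (d(c0 := d c0 - t))"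
    "hall_reducible I N (b(i0 := b i0 - t)) A (d(c0 := d c0 - t))"
proof -
  txt \<open>Ship \<open>t\<close> = the least of \<open>b i0\<close>, \<open>d c0\<close> and the slacks of the sets \<open>K \<subseteq> A - {c0}\<close>
    meeting \<open>N i0\<close> along the edge \<open>(i0, c0)\<close>: Hall's condition survives and one of these hits 0.\<close>
  define slack where "slack K = neighbour_weight I N b K - sum d K" for K
  define Ks where "Ks = {K. K \<subseteq> A - {c0} \<and> N i0 \<inter> K \<noteq> {}}"
  define T where "T = insert (b i0) (insert (d c0) (slack ` Ks))"
  have fin: "finite I" "finite A" using hall unfolding hall_condition_def by auto
  then have "finite T" unfolding T_def Ks_def by auto
  have "0 < b i" if "i \<in> I" for i
    using hall \<open>\<not> hall_reducible I N b A d\<close> that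
    unfolding hall_condition_def hall_reducible_def by force
  moreover have "0 < d c" if "c \<in> A" for c
    using \<open>\<not> hall_reducible I N b A d\<close> that unfolding hall_reducible_def by force
  moreover have "0 < slack K" if "K \<in> Ks" for K
  proof -
    have "K \<noteq> {}" "K \<subset> A" using that \<open>c0 \<in> A\<close> unfolding Ks_def by auto
    then have "sum d K \<noteq> neighbour_weight I N b K" "sum d K \<le> neighbour_weight I N b K"
      using hall \<open>\<not> hall_reducible I N b A d\<close>
      unfolding hall_condition_def hall_reducible_def by auto
    then show ?thesis unfolding slack_def by simp
  qed
  ultimately have "0 < Min T" using \<open>finite T\<close> assms(3,4) unfolding T_def by auto
  moreover have "hall_condition I N (b(i0 := b i0 - Min T)) A (d(c0 := d c0 - Min T))"
  proof (rule hall_condition_transfer[OF hall assms(3-5)])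
    have "b i0 \<in> T" "\<And>K. K \<in> Ks \<Longrightarrow> slack K \<in> T" unfolding T_def by auto
    then show "Min T \<le> b i0" "\<And>K. K \<subseteq> A - {c0} \<Longrightarrow> N i0 \<inter> K \<noteq> {} \<Longrightarrow>
        Min T \<le> neighbour_weight I N b K - sum d K"
      using Min_le[OF \<open>finite T\<close>] unfolding Ks_def slack_def by auto
  qed (use \<open>0 < Min T\<close> in simp)
  moreover have "hall_reducible I N (b(i0 := b i0 - Min T)) A (d(c0 := d c0 - Min T))"
  proof -
    have "Min T \<in> T" using \<open>finite T\<close> by (rule Min_in) (simp add: T_def)
    then consider "Min T = b i0" | "Min T = d c0" | K where "K \<in> Ks" "Min T = slack K"
      unfolding T_def by blast
    then show ?thesis
    proof cases
      case 3
      then have "K \<noteq> {}" "K \<subset> A" "c0 \<notin> K" "finite K"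
        using \<open>c0 \<in> A\<close> fin(2) finite_subset[of K A] unfolding Ks_def by auto
      then show ?thesis
        using 3 neighbour_weight_fun_upd[OF fin(1) \<open>i0 \<in> I\<close>, of N b _ K]
          sum_fun_upd[OF \<open>finite K\<close>, of d c0]
        unfolding hall_reducible_def Ks_def slack_def by auto
    qed (use assms(3,4) in \<open>auto simp: hall_reducible_def\<close>)
  qed
  ultimately show thesis by (rule that)
qed

lemma hall_condition_obtain_neighbour:
  assumes hall: "hall_condition I N b A d" and "c \<in> A" "0 < d c"
  obtains i where "i \<in> I" "c \<in> N i"
proof -
  have "sum d {c} \<le> neighbour_weight I N b {c}"
    using hall \<open>c \<in> A\<close> unfolding hall_condition_def by blast
  then have "0 < neighbour_weight I N b {c}" using \<open>0 < d c\<close> by simp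
  have "{i\<in>I. N i \<inter> {c} \<noteq> {}} \<noteq> {}"
  proof
    assume "{i\<in>I. N i \<inter> {c} \<noteq> {}} = {}"
    then have "neighbour_weight I N b {c} = 0" by (simp only: neighbour_weight_def sum.empty)
    with \<open>0 < neighbour_weight I N b {c}\<close> show False by simp
  qed
  then show thesis using that by blast
qed

theorem fractional_hall:
  "hall_condition I N b A d \<Longrightarrow> \<exists>F. allocation I N b A d F"
proof (induction "card I + card A" arbitrary: I A b d rule: less_induct)
  case less
  show ?case
  proof (cases "A = {}")
    case True
    then have "allocation I N b A d (\<lambda>i c. 0)"
      using less.prems unfolding allocation_def hall_condition_def by simp
    then show ?thesis by blast
  next
    case False
    then obtain c0 where "c0 \<in> A" by blast
    show ?thesis
    proof (cases "hall_reducible I N b A d")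
      case True
      show ?thesis by (rule allocation_if_hall_reducible[OF less.hyps less.prems True])
    next
      case irreducible: False
      have "0 < d c0" using irreducible \<open>c0 \<in> A\<close> unfolding hall_reducible_def by force
      then obtain i0 where "i0 \<in> I" "c0 \<in> N i0"
        using hall_condition_obtain_neighbour[OF less.prems \<open>c0 \<in> A\<close>] by blast
      obtain t where "0 < t"
        and hall_t: "hall_condition I N (b(i0 := b i0 - t)) A (d(c0 := d c0 - t))"
        and reducible_t: "hall_reducible I N (b(i0 := b i0 - t)) A (d(c0 := d c0 - t))"
        using hall_reducible_after_transfer[OF less.prems irreducible
            \<open>i0 \<in> I\<close> \<open>c0 \<in> A\<close> \<open>c0 \<in> N i0\<close>] .
      obtain F where F: "allocation I N (b(i0 := b i0 - t)) A (d(c0 := d c0 - t)) F"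
        using allocation_if_hall_reducible[OF less.hyps hall_t reducible_t] by blast
      have "finite I" "finite A" using less.prems unfolding hall_condition_def by auto
      with allocation_transfer[OF F \<open>i0 \<in> I\<close> \<open>c0 \<in> A\<close> \<open>c0 \<in> N i0\<close>] \<open>0 < t\<close>
      show ?thesis by simp
    qed
  qed
qed

abbreviation approval_weight :: "'c set \<Rightarrow> ('c set \<Rightarrow> nat) \<Rightarrow> 'c set \<Rightarrow> real" where
  "approval_weight C B K \<equiv> neighbour_weight (Pow C) (\<lambda>y. y) (\<lambda>y. real (B y)) K"

lemma sum_Supp_le_approval_weight:
  assumes "finite C" "A \<subseteq> C" "F \<in> Ffam C B A" "K \<subseteq> A"
  shows "(\<Sum>c\<in>K. Supp C F c) \<le> approval_weight C B K"
proof -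
  have "finite A" using finite_subset[OF assms(2,1)] .
  then have "finite K" using finite_subset[OF assms(4)] by blast
  have per_ballot: "(\<Sum>c\<in>K. F y c) \<le> (if y \<inter> K \<noteq> {} then real (B y) else 0)"
    if "y \<in> Pow C" for y
  proof (cases "y \<inter> K = {}")
    case True
    have "sum (F y) K = 0"
      using assms(3,4) that True unfolding Ffam_def by (intro sum.neutral) blast
    then show ?thesis using True by simp
  next
    case False
    have "F y c = 0" if "c \<in> K - K \<inter> y" for c
      using assms(3,4) \<open>y \<in> Pow C\<close> that unfolding Ffam_def by blast
    then have "(\<Sum>c\<in>K. F y c) = (\<Sum>c\<in>K \<inter> y. F y c)"
      using \<open>finite K\<close> by (intro sum.mono_neutral_right) auto
    also have "\<dots> \<le> (\<Sum>c\<in>A \<inter> y. F y c)"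
      using assms(3,4) \<open>finite A\<close> that unfolding Ffam_def by (intro sum_mono2) auto
    also have "\<dots> = real (B y)" using assms(3,4) that False unfolding Ffam_def by blast
    finally show ?thesis using False by simp
  qed
  have "(\<Sum>c\<in>K. Supp C F c) = (\<Sum>y\<in>Pow C. \<Sum>c\<in>K. F y c)"
    unfolding Supp_def by (rule sum.swap)
  also have "\<dots> \<le> (\<Sum>y\<in>Pow C. if y \<inter> K \<noteq> {} then real (B y) else 0)"
    using per_ballot by (rule sum_mono)
  also have "\<dots> = approval_weight C B K"
    unfolding neighbour_weight_def by (rule sum.inter_filter[symmetric]) (use \<open>finite C\<close> in simp)
  finally show ?thesis .
qed

lemma Ffam_of_allocation:
  assumes "finite C" "A \<subseteq> C" and F: "allocation (Pow C) (\<lambda>y. y) (\<lambda>y. real (B y)) A d F"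
  shows "\<exists>G\<in>Ffam C B A. \<forall>c\<in>A. d c \<le> Supp C G c"
proof -
  have "finite A" using finite_subset[OF assms(2,1)] .
  txt \<open>Capacity left unused on a ballot goes to an arbitrary approved candidate.\<close>
  define pick where "pick y = (SOME c. c \<in> A \<inter> y)" for y
  define G where "G y c = (if c \<in> A \<inter> y then F y c +
      (if c = pick y then real (B y) - sum (F y) A else 0) else 0)" for y c
  have "G \<in> Ffam C B A"
    unfolding Ffam_def
  proof (intro CollectI conjI ballI impI)
    fix y c assume "y \<in> Pow C" "c \<in> A"
    then show "0 \<le> G y c" "c \<notin> y \<Longrightarrow> G y c = 0"
      using F unfolding allocation_def G_def by auto
  next
    fix y assume "y \<in> Pow C" "y \<inter> A \<noteq> {}"
    then have "pick y \<in> A \<inter> y" unfolding pick_def by (metis Int_commute ex_in_conv someI_ex)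
    have "sum (F y) A = (\<Sum>c\<in>A \<inter> y. F y c)"
      using F \<open>finite A\<close> unfolding allocation_def by (intro sum.mono_neutral_right) auto
    moreover have "(\<Sum>c\<in>A \<inter> y. G y c) =
        (\<Sum>c\<in>A \<inter> y. F y c) + (real (B y) - sum (F y) A)"
      using \<open>pick y \<in> A \<inter> y\<close> \<open>finite A\<close> unfolding G_def by (simp add: sum.distrib)
    ultimately show "(\<Sum>c\<in>A \<inter> y. G y c) = real (B y)" by simp
  qed
  moreover have "d c \<le> Supp C G c" if "c \<in> A" for c
  proof -
    have "F y c \<le> G y c" if "y \<in> Pow C" for y
      using F \<open>c \<in> A\<close> that unfolding allocation_def G_def by auto
    then have "(\<Sum>y\<in>Pow C. F y c) \<le> Supp C G c" unfolding Supp_def by (rule sum_mono)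
    then show ?thesis using F that unfolding allocation_def by force
  qed
  ultimately show ?thesis by blast
qed

lemma Min_Supp_le_ratio:
  assumes "finite C" "A \<subseteq> C" "F \<in> Ffam C B A" "K \<subseteq> A" "K \<noteq> {}"
  shows "Min ((\<lambda>c. Supp C F c) ` A) \<le> approval_weight C B K / card K"
proof -
  define m where "m = Min ((\<lambda>c. Supp C F c) ` A)"
  have "finite A" using finite_subset[OF assms(2,1)] .
  then have "finite K" using finite_subset[OF assms(4)] by blast
  have "real (card K) * m = (\<Sum>c\<in>K. m)" by (rule sum_constant[symmetric])
  also have "\<dots> \<le> (\<Sum>c\<in>K. Supp C F c)"
    using \<open>finite A\<close> assms(4) unfolding m_def by (intro sum_mono Min_le) auto
  also have "\<dots> \<le> approval_weight C B K" by (rule sum_Supp_le_approval_weight[OF assms(1-4)])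
  finally have "m * real (card K) \<le> approval_weight C B K" by (simp only: mult.commute)
  moreover have "0 < real (card K)" using \<open>finite K\<close> assms(5) by (simp add: card_gt_0_iff)
  ultimately show ?thesis unfolding m_def[symmetric] by (simp only: pos_le_divide_eq)
qed

lemma maxMin_eq_min_ratio:
  assumes "finite C" "A \<subseteq> C" "K0 \<subseteq> A" "K0 \<noteq> {}"
    and min: "\<And>K. K \<subseteq> A \<Longrightarrow> K \<noteq> {} \<Longrightarrow>
      approval_weight C B K0 / card K0 \<le> approval_weight C B K / card K"
  shows "maxMin C B A = approval_weight C B K0 / card K0"
proof -
  define \<mu> where "\<mu> = approval_weight C B K0 / card K0"
  have "finite A" using finite_subset[OF assms(2,1)] .
  have "sum (\<lambda>_. \<mu>) K \<le> approval_weight C B K" if "K \<subseteq> A" for K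
  proof (cases "K = {}")
    case False
    moreover have "finite K" using finite_subset[OF that \<open>finite A\<close>] .
    ultimately have "0 < card K" by (simp add: card_gt_0_iff)
    then show ?thesis using min[OF that False] by (simp add: \<mu>_def pos_le_divide_eq mult.commute)
  qed (simp add: neighbour_weight_def)
  then have "hall_condition (Pow C) (\<lambda>y. y) (\<lambda>y. real (B y)) A (\<lambda>_. \<mu>)"
    using \<open>finite C\<close> \<open>finite A\<close> unfolding hall_condition_def by simp
  then obtain F where "allocation (Pow C) (\<lambda>y. y) (\<lambda>y. real (B y)) A (\<lambda>_. \<mu>) F"
    using fractional_hall by blast
  then obtain G where G: "G \<in> Ffam C B A" "\<forall>c\<in>A. \<mu> \<le> Supp C G c"
    using Ffam_of_allocation[OF assms(1,2)] by blast
  have upper: "Min ((\<lambda>c. Supp C F c) ` A) \<le> \<mu>" if "F \<in> Ffam C B A" for F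
    unfolding \<mu>_def by (rule Min_Supp_le_ratio[OF assms(1,2) that assms(3,4)])
  have "A \<noteq> {}" using assms(3,4) by blast
  then have "\<mu> \<le> Min ((\<lambda>c. Supp C G c) ` A)" using G(2) \<open>finite A\<close> by simp
  also have "\<dots> \<le> maxMin C B A"
    unfolding maxMin_def by (rule cSUP_upper[OF G(1) bdd_aboveI2[OF upper]])
  finally have "\<mu> \<le> maxMin C B A" .
  moreover have "maxMin C B A \<le> \<mu>"
    unfolding maxMin_def using G(1) by (intro cSUP_least upper) blast
  ultimately show ?thesis unfolding \<mu>_def[symmetric] by (rule antisym[rotated])
qed

lemma eq_if_sum_le_card_mult:
  fixes f :: "'a \<Rightarrow> real" and \<mu> :: real
  assumes "finite K" "\<forall>c\<in>K. \<mu> \<le> f c" "sum f K \<le> card K * \<mu>" "c \<in> K"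
  shows "f c = \<mu>"
proof -
  have nonneg: "\<And>c. c \<in> K \<Longrightarrow> 0 \<le> f c - \<mu>" using assms(2) by simp
  have "(\<Sum>c\<in>K. f c - \<mu>) = sum f K - card K * \<mu>" by (simp add: sum_subtractf)
  moreover have "0 \<le> (\<Sum>c\<in>K. f c - \<mu>)" using nonneg by (rule sum_nonneg)
  ultimately have "(\<Sum>c\<in>K. f c - \<mu>) = 0" using assms(3) by linarith
  then show ?thesis using sum_nonneg_eq_0_iff[OF assms(1) nonneg] assms(4) by simp
qed

lemma Fopt_Supp_eq_maxMin:
  assumes "finite C" "A \<subseteq> C" "K \<subseteq> A" "K \<noteq> {}"
    and maxMin: "maxMin C B A = approval_weight C B K / card K"
    and "F \<in> Fopt C B A" "c \<in> K"
  shows "Supp C F c = maxMin C B A"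
proof (rule eq_if_sum_le_card_mult[OF _ _ _ \<open>c \<in> K\<close>])
  show "finite K" using finite_subset[OF assms(3) finite_subset[OF assms(2,1)]] .
  then have "0 < card K" using \<open>K \<noteq> {}\<close> by (simp add: card_gt_0_iff)
  show "\<forall>c\<in>K. maxMin C B A \<le> Supp C F c" using assms(3,6) unfolding Fopt_def by blast
  have "(\<Sum>c\<in>K. Supp C F c) \<le> approval_weight C B K"
    using assms(6) unfolding Fopt_def by (intro sum_Supp_le_approval_weight[OF assms(1-2) _ assms(3)]) blast
  also have "\<dots> = card K * maxMin C B A" unfolding maxMin using \<open>0 < card K\<close> by simp
  finally show "(\<Sum>c\<in>K. Supp C F c) \<le> card K * maxMin C B A" .
qed

lemma ex_nonempty_subset_minimizing:
  fixes f :: "'a set \<Rightarrow> 'b::linorder"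
  assumes "finite A" "A \<noteq> {}"
  shows "\<exists>K0. K0 \<subseteq> A \<and> K0 \<noteq> {} \<and> (\<forall>K. K \<subseteq> A \<longrightarrow> K \<noteq> {} \<longrightarrow> f K0 \<le> f K)"
proof -
  define S where "S = {K. K \<subseteq> A \<and> K \<noteq> {}}"
  have "finite S" unfolding S_def by (rule finite_subset[of _ "Pow A"]) (use \<open>finite A\<close> in auto)
  moreover have "S \<noteq> {}" using \<open>A \<noteq> {}\<close> unfolding S_def by blast
  ultimately have "\<exists>K0. is_arg_min f (\<lambda>K. K \<in> S) K0" by (rule ex_is_arg_min_if_finite)
  then obtain K0 where "is_arg_min f (\<lambda>K. K \<in> S) K0" ..
  then have "K0 \<in> S" "\<forall>K. K \<in> S \<longrightarrow> f K0 \<le> f K" by (simp_all add: is_arg_min_linorder)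
  then show ?thesis unfolding S_def by blast
qed

theorem corollary1:
  fixes V :: "'v set" and C :: "'c set" and S :: nat and B :: "'c set \<Rightarrow> nat"
    and A :: "'c set"
  assumes "election V C S B"
    and "A \<noteq> {}" and "A \<subseteq> C"
  shows "\<exists>K. K \<noteq> {} \<and> K \<subseteq> A \<and>
           (\<forall>F\<in>Fopt C B A. \<forall>c\<in>K. Supp C F c = maxMin C B A) \<and>
           maxMin C B A = (\<Sum>y\<in>{y\<in>Pow C. y \<inter> K \<noteq> {}}. real (B y)) / real (card K)"
proof -
  have "finite C" using assms(1) unfolding election_def by simp
  then have "finite A" using finite_subset[OF assms(3)] by blast
  obtain K where K: "K \<subseteq> A" "K \<noteq> {}"
    and min: "\<forall>K'. K' \<subseteq> A \<longrightarrow> K' \<noteq> {} \<longrightarrow>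
      approval_weight C B K / card K \<le> approval_weight C B K' / card K'"
    using ex_nonempty_subset_minimizing[OF \<open>finite A\<close> assms(2),
        of "\<lambda>K. approval_weight C B K / card K"] by blast
  have maxMin: "maxMin C B A = approval_weight C B K / card K"
    by (rule maxMin_eq_min_ratio[OF \<open>finite C\<close> assms(3) K min[rule_format]])
  have "\<forall>F\<in>Fopt C B A. \<forall>c\<in>K. Supp C F c = maxMin C B A"
    using Fopt_Supp_eq_maxMin[OF \<open>finite C\<close> assms(3) K maxMin] by blast
  with K maxMin show ?thesis unfolding neighbour_weight_def by (intro exI[of _ K]) simp
qed

end
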